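(* Let $K$ be an imaginary quadratic field with discriminant $d_K$, let $f\ge1$ and let $\mathcal{O}$ be the order of conductor $f$ in $K$, of discriminant $D=f^2d_K$. Let $\tau=a/b\in K\cap\mathbb{H}$ with $a,b\in\mathcal{O}_K$, $b\ne0$, have discriminant $D(\tau)=D$. Then $\mathrm{pr}_D([\Xi_D(Q_\tau)])=[\langle a,b\rangle]$ in $\mathrm{Cl}_K$, where $\langle a,b\rangle=a\mathcal{O}_K+b\mathcal{O}_K$.
   Context: $\mathbb{H}$ is the upper half-plane. For $\tau\in K\cap\mathbb{H}$, $Q_\tau(x,y)=Ax^2+Bxy+Cy^2$ is the unique form with $A,B,C\in\mathbb{Z}$, $\gcd(A,B,C)=1$, $A>0$, $A\tau^2+B\tau+C=0$, and $D(\tau)=B^2-4AC$. For a positive definite form $Q=Ax^2+Bxy+Cy^2$ of discriminant $D$, $\Xi_D(Q):=\mathbb{Z}A+\mathbb{Z}\frac{-B+\sqrt{D}}{2}$, which is an invertible ideal of $\mathcal{O}$. $\mathrm{Cl}(\mathcal{O})$ is the group of invertible fractional $\mathcal{O}$-ideals modulo principal ones, and $\mathrm{pr}_D\colon\mathrm{Cl}(\mathcal{O})\to\mathrm{Cl}_K$ is the well-defined map $[\mathfrak{a}]\mapsto[\mathfrak{a}\mathcal{O}_K]$. *)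

theory Defs
  imports Complex_Main "HOL-Computational_Algebra.Squarefree"
begin

definition fundamental_disc :: "int \<Rightarrow> bool" where
  "fundamental_disc d \<longleftrightarrow> d \<noteq> 1 \<and>
     ((d mod 4 = 1 \<and> squarefree d) \<or>
      (\<exists>m. d = 4 * m \<and> (m mod 4 = 2 \<or> m mod 4 = 3) \<and> squarefree m))"

definition csqrt_neg :: "int \<Rightarrow> complex" where
  "csqrt_neg d = \<i> * complex_of_real (sqrt (real_of_int (- d)))"

definition qfield :: "int \<Rightarrow> complex set" where
  "qfield dK = {of_rat r + of_rat s * csqrt_neg dK | r s. True}"

definition omega :: "int \<Rightarrow> complex" where
  "omega dK = (of_int dK + csqrt_neg dK) / 2"

definition qorder :: "int \<Rightarrow> nat \<Rightarrow> complex set" where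
  "qorder dK f = {of_int m + of_int n * of_nat f * omega dK | m n. True}"

abbreviation ring_of_integers :: "int \<Rightarrow> complex set" where
  "ring_of_integers dK \<equiv> qorder dK 1"

definition upper_half_plane :: "complex set" where
  "upper_half_plane = {z. Im z > 0}"

definition Xi :: "int \<Rightarrow> int \<Rightarrow> int \<Rightarrow> int \<Rightarrow> complex set" where
  "Xi D A B C = {of_int m * of_int A + of_int n * ((- of_int B + csqrt_neg D) / 2) | m n. True}"

definition ext_OK :: "int \<Rightarrow> complex set \<Rightarrow> complex set" where
  "ext_OK dK I = {x. \<exists>xs ys. length xs = length ys \<and> set xs \<subseteq> I \<and>
      set ys \<subseteq> ring_of_integers dK \<and> x = sum_list (map2 (*) xs ys)}"

definition ideal2 :: "int \<Rightarrow> complex \<Rightarrow> complex \<Rightarrow> complex set" where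
  "ideal2 dK a b = {u * a + v * b | u v. u \<in> ring_of_integers dK \<and> v \<in> ring_of_integers dK}"

definition same_class :: "int \<Rightarrow> complex set \<Rightarrow> complex set \<Rightarrow> bool" where
  "same_class dK I J \<longleftrightarrow> (\<exists>c\<in>qfield dK. c \<noteq> 0 \<and> (\<lambda>z. c * z) ` I = J)"

end

theory Submission
  imports Defs
begin

text \<open>Since \<open>A \<tau>\<close> is the root \<open>(-B + \<surd>D)/2\<close> of \<open>X\<^sup>2 + B X + AC\<close> lying in the upper
  half-plane, \<open>\<Xi>\<^sub>D(Q\<^sub>\<tau>) = \<int>A + \<int>A\<tau>\<close>. Its extension to \<open>\<O>\<^sub>K\<close> is \<open>A \<O>\<^sub>K + A\<tau> \<O>\<^sub>K\<close>,
  and multiplying by \<open>b/A \<in> K\<^sup>\<times>\<close> turns this into \<open>b \<O>\<^sub>K + a \<O>\<^sub>K\<close>.\<close>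

definition zlattice :: "complex \<Rightarrow> complex \<Rightarrow> complex set" where
  "zlattice \<alpha> \<beta> = {of_int m * \<alpha> + of_int n * \<beta> | m n. True}"

lemma Xi_eq_zlattice: "Xi D A B C = zlattice (of_int A) ((- of_int B + csqrt_neg D) / 2)"
  unfolding Xi_def zlattice_def by (simp add: mult.commute)

lemma qorder_zero: "0 \<in> qorder dK f"
  unfolding qorder_def by (auto intro!: exI[of _ 0])

lemma qorder_add:
  assumes "x \<in> qorder dK f" "y \<in> qorder dK f"
  shows "x + y \<in> qorder dK f"
proof -
  obtain m n m' n' where "x = of_int m + of_int n * of_nat f * omega dK"
    "y = of_int m' + of_int n' * of_nat f * omega dK"
    using assms unfolding qorder_def by blast
  then have "x + y = of_int (m + m') + of_int (n + n') * of_nat f * omega dK"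
    by (simp add: algebra_simps)
  then show ?thesis unfolding qorder_def by blast
qed

lemma qorder_of_int_mult:
  assumes "x \<in> qorder dK f"
  shows "of_int k * x \<in> qorder dK f"
proof -
  obtain m n where "x = of_int m + of_int n * of_nat f * omega dK"
    using assms unfolding qorder_def by blast
  then have "of_int k * x = of_int (k * m) + of_int (k * n) * of_nat f * omega dK"
    by (simp add: algebra_simps)
  then show ?thesis unfolding qorder_def by blast
qed

lemma qorder_subset_qfield: "qorder dK f \<subseteq> qfield dK"
proof
  fix x assume "x \<in> qorder dK f"
  then obtain m n where x: "x = of_int m + of_int n * of_nat f * omega dK"
    unfolding qorder_def by blast
  have "x = of_rat (of_int m + of_int (n * int f) * of_int dK / 2)
          + of_rat (of_int (n * int f) / 2) * csqrt_neg dK"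
    unfolding x omega_def by (simp add: of_rat_add of_rat_mult of_rat_divide field_simps)
  then show "x \<in> qfield dK" unfolding qfield_def by blast
qed

lemma qfield_divide_of_int:
  assumes "x \<in> qfield dK"
  shows "x / of_int k \<in> qfield dK"
proof -
  obtain r s where "x = of_rat r + of_rat s * csqrt_neg dK"
    using assms unfolding qfield_def by blast
  then have "x / of_int k = of_rat (r / of_int k) + of_rat (s / of_int k) * csqrt_neg dK"
    by (simp add: of_rat_divide add_divide_distrib)
  then show ?thesis unfolding qfield_def by blast
qed

lemma csqrt_neg_power2:
  fixes d :: int
  assumes "d \<le> 0"
  shows "csqrt_neg d ^ 2 = of_int d"
proof -
  have "sqrt (real_of_int (- d)) ^ 2 = real_of_int (- d)"
    using assms by simp
  then have "complex_of_real (sqrt (real_of_int (- d))) ^ 2 = - of_int d"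
    by (metis of_real_power of_real_of_int_eq of_int_minus)
  then show ?thesis unfolding csqrt_neg_def by (simp add: power_mult_distrib)
qed

lemma Im_csqrt_neg_nonneg: "d \<le> 0 \<Longrightarrow> Im (csqrt_neg d) \<ge> 0"
  unfolding csqrt_neg_def by simp

lemma upper_half_plane_root:
  assumes "A > 0" and "Im \<tau> > 0" and "D \<le> 0"
    and "of_int A * \<tau>^2 + of_int B * \<tau> + of_int C = 0"
    and "B^2 - 4 * A * C = D"
  shows "(- of_int B + csqrt_neg D) / 2 = of_int A * \<tau>"
proof -
  define s where "s = 2 * of_int A * \<tau> + of_int B"
  have "s^2 = 4 * of_int A * (of_int A * \<tau>^2 + of_int B * \<tau> + of_int C) + of_int (B^2 - 4*A*C)"
    unfolding s_def by (simp add: algebra_simps power2_eq_square)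
  then have "s^2 = csqrt_neg D ^ 2"
    using assms(3-5) by (simp add: csqrt_neg_power2)
  then have "(s - csqrt_neg D) * (s + csqrt_neg D) = 0"
    by (simp add: algebra_simps power2_eq_square)
  moreover have "Im (s + csqrt_neg D) > 0"
    using assms(1-3) Im_csqrt_neg_nonneg[of D] unfolding s_def by (simp add: add_pos_nonneg)
  then have "s + csqrt_neg D \<noteq> 0" by (metis zero_complex.sel(2) less_irrefl)
  ultimately have "s = csqrt_neg D" by simp
  then show ?thesis unfolding s_def by (simp add: algebra_simps)
qed

lemma ideal2_add:
  assumes "x \<in> ideal2 dK \<alpha> \<beta>" "y \<in> ideal2 dK \<alpha> \<beta>"
  shows "x + y \<in> ideal2 dK \<alpha> \<beta>"
proof -
  obtain u v u' v' where "u \<in> ring_of_integers dK" "v \<in> ring_of_integers dK"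
    "u' \<in> ring_of_integers dK" "v' \<in> ring_of_integers dK"
    "x = u * \<alpha> + v * \<beta>" "y = u' * \<alpha> + v' * \<beta>"
    using assms unfolding ideal2_def by blast
  then have "u + u' \<in> ring_of_integers dK" "v + v' \<in> ring_of_integers dK"
    and "x + y = (u + u') * \<alpha> + (v + v') * \<beta>"
    by (auto simp: qorder_add algebra_simps)
  then show ?thesis unfolding ideal2_def by blast
qed

lemma zlattice_mult_in_ideal2:
  assumes "x \<in> zlattice \<alpha> \<beta>" "y \<in> ring_of_integers dK"
  shows "x * y \<in> ideal2 dK \<alpha> \<beta>"
proof -
  obtain m n where "x = of_int m * \<alpha> + of_int n * \<beta>"
    using assms(1) unfolding zlattice_def by blast
  then have "x * y = (of_int m * y) * \<alpha> + (of_int n * y) * \<beta>"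
    by (simp add: algebra_simps)
  then show ?thesis
    using assms(2) qorder_of_int_mult unfolding ideal2_def by blast
qed

lemma ext_OK_zlattice: "ext_OK dK (zlattice \<alpha> \<beta>) = ideal2 dK \<alpha> \<beta>"
proof
  have "sum_list (map2 (*) xs ys) \<in> ideal2 dK \<alpha> \<beta>"
    if "length xs = length ys" "set xs \<subseteq> zlattice \<alpha> \<beta>" "set ys \<subseteq> ring_of_integers dK"
    for xs ys
    using that
  proof (induction xs ys rule: list_induct2)
    case Nil
    then show ?case
      using qorder_zero unfolding ideal2_def by (auto intro!: exI[of _ 0])
  next
    case (Cons x xs y ys)
    then show ?case by (simp add: ideal2_add zlattice_mult_in_ideal2)
  qed
  then show "ext_OK dK (zlattice \<alpha> \<beta>) \<subseteq> ideal2 dK \<alpha> \<beta>"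
    unfolding ext_OK_def by blast
next
  show "ideal2 dK \<alpha> \<beta> \<subseteq> ext_OK dK (zlattice \<alpha> \<beta>)"
  proof
    fix z assume "z \<in> ideal2 dK \<alpha> \<beta>"
    then obtain u v where "u \<in> ring_of_integers dK" "v \<in> ring_of_integers dK"
      and z: "z = sum_list (map2 (*) [\<alpha>, \<beta>] [u, v])"
      unfolding ideal2_def by auto
    moreover have "\<alpha> \<in> zlattice \<alpha> \<beta>"
      unfolding zlattice_def by (rule CollectI, rule exI[of _ 1], rule exI[of _ 0]) simp
    moreover have "\<beta> \<in> zlattice \<alpha> \<beta>"
      unfolding zlattice_def by (rule CollectI, rule exI[of _ 0], rule exI[of _ 1]) simp
    ultimately show "z \<in> ext_OK dK (zlattice \<alpha> \<beta>)"
      unfolding ext_OK_def by (intro CollectI exI[of _ "[\<alpha>, \<beta>]"] exI[of _ "[u, v]"]) auto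
  qed
qed

lemma image_mult_ideal2: "(\<lambda>z. c * z) ` ideal2 dK \<alpha> \<beta> = ideal2 dK (c * \<alpha>) (c * \<beta>)"
proof -
  have "c * (u * \<alpha> + v * \<beta>) = u * (c * \<alpha>) + v * (c * \<beta>)" for u v
    by (simp add: algebra_simps)
  then show ?thesis
    unfolding ideal2_def image_def by (auto; metis)
qed

lemma ideal2_commute: "ideal2 dK \<alpha> \<beta> = ideal2 dK \<beta> \<alpha>"
  unfolding ideal2_def by (auto; metis add.commute)

theorem proposition5p8:
  fixes dK :: int and f :: nat and D :: int and a b \<tau> :: complex and A B C :: int
  assumes "fundamental_disc dK" and "dK < 0"
    and "f \<ge> 1" and "D = int f ^ 2 * dK"
    and "a \<in> ring_of_integers dK" and "b \<in> ring_of_integers dK" and "b \<noteq> 0"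
    and "\<tau> = a / b" and "\<tau> \<in> upper_half_plane"
    and "gcd (gcd A B) C = 1" and "A > 0"
    and "of_int A * \<tau>^2 + of_int B * \<tau> + of_int C = 0"
    and "B^2 - 4 * A * C = D"
  shows "same_class dK (ext_OK dK (Xi D A B C)) (ideal2 dK a b)"
proof -
  have "D \<le> 0"
    using assms(2,4) by (simp add: mult_nonneg_nonpos)
  then have "Xi D A B C = zlattice (of_int A) (of_int A * \<tau>)"
    using assms(9,11-13) upper_half_plane_root[of A \<tau> D B C]
    by (simp add: Xi_eq_zlattice upper_half_plane_def)
  then have ext_Xi: "ext_OK dK (Xi D A B C) = ideal2 dK (of_int A) (of_int A * \<tau>)"
    by (simp add: ext_OK_zlattice)
  define c where "c = b / of_int A"
  have c_generators: "c * of_int A = b" "c * (of_int A * \<tau>) = a"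
    unfolding c_def using assms(7,8,11) by simp_all
  have "c \<in> qfield dK"
    unfolding c_def using assms(6) qorder_subset_qfield by (blast intro: qfield_divide_of_int)
  moreover have "c \<noteq> 0"
    unfolding c_def using assms(7,11) by simp
  moreover have "(\<lambda>z. c * z) ` ext_OK dK (Xi D A B C) = ideal2 dK a b"
    by (simp add: ext_Xi image_mult_ideal2 c_generators ideal2_commute[of dK b])
  ultimately show ?thesis
    unfolding same_class_def by blast
qed

end
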